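(* Let $\mathbb{K}$ be a field of characteristic $0$ and let $L=\sum_{i=0}^{J}a_i(n)\sigma^i$ be a nonzero operator with $a_i(n)\in\mathbb{K}[n]$. Then the continued zero index satisfies $C_L\le J$.
   Context: $\sigma$ is the shift operator. The adjoint of $L$ acts on polynomials by $L^*(x(n))=\sum_{i=0}^J a_i(n-i)x(n-i)$. Continued zero index $C_L$: if $L^*(1)\neq0$ then $C_L=0$; if $L^*(1)=0$ then $C_L$ is the positive integer with $L^*(n^{C_L})\neq 0$ and $L^*(n^i)=0$ for $0\le i\le C_L-1$. *)

theory Defs
  imports "HOL-Computational_Algebra.Polynomial"
begin

text \<open>The operator L = sum_{i=0}^J a_i(n) sigma^i is given by its coefficient
  family a :: nat => 'a poly (only a 0, ..., a J matter) and the order bound J.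
  The shift n |-> n - i on polynomials is composition with [:-i, 1:].\<close>

definition adjoint :: "(nat \<Rightarrow> 'a::comm_ring_1 poly) \<Rightarrow> nat \<Rightarrow> 'a poly \<Rightarrow> 'a poly" where
  "adjoint a J x =
     (\<Sum>i=0..J. pcompose (a i) [:- of_nat i, 1:] * pcompose x [:- of_nat i, 1:])"

definition continued_zero_index :: "(nat \<Rightarrow> 'a::comm_ring_1 poly) \<Rightarrow> nat \<Rightarrow> nat" where
  "continued_zero_index a J =
     (if adjoint a J 1 \<noteq> 0 then 0
      else (LEAST c. 0 < c \<and> adjoint a J (monom 1 c) \<noteq> 0 \<and>
                     (\<forall>i<c. adjoint a J (monom 1 i) = 0)))"

end

theory Submission
  imports Defs
begin

text \<open>\<open>L\<^sup>*\<close> is linear, so if it annihilates \<open>1, n, \<dots>, n\<^sup>J\<close> it annihilates every polynomial of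
  degree at most \<open>J\<close>. Fix \<open>k \<le> J\<close> and a point \<open>t\<close>, and apply \<open>L\<^sup>*\<close> to the polynomial of degree
  at most \<open>J\<close> vanishing exactly at the points \<open>t - j\<close>, \<open>j \<le> J\<close>, \<open>j \<noteq> k\<close> (distinct in
  characteristic \<open>0\<close>): evaluating at \<open>t\<close> leaves only the term \<open>a\<^sub>k(t - k)\<close> times a nonzero
  factor. Hence every \<open>a\<^sub>k\<close> vanishes at all points, so \<open>L = 0\<close>. For nonzero \<open>L\<close> some
  \<open>L\<^sup>*(n\<^sup>c)\<close> with \<open>c \<le> J\<close> is nonzero, and \<open>C\<^sub>L\<close> is the least such \<open>c\<close>.\<close>

lemma smult_sum_right: "smult c (\<Sum>s\<in>S. p s) = (\<Sum>s\<in>S. smult c (p s))"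
  by (induction S rule: infinite_finite_induct) (simp_all add: smult_add_right)

lemma adjoint_sum: "adjoint a J (\<Sum>s\<in>S. p s) = (\<Sum>s\<in>S. adjoint a J (p s))"
  by (simp add: adjoint_def pcompose_sum sum_distrib_left sum.swap[of _ S])

lemma adjoint_smult: "adjoint a J (smult c p) = smult c (adjoint a J p)"
  by (simp add: adjoint_def pcompose_smult smult_sum_right)

lemma poly_adjoint:
  "poly (adjoint a J p) t = (\<Sum>i=0..J. poly (a i) (t - of_nat i) * poly p (t - of_nat i))"
  by (simp add: adjoint_def poly_sum poly_pcompose)

lemma adjoint_eq_0_if_monoms_annihilated:
  assumes "\<forall>c\<le>d. adjoint a J (monom 1 c) = 0" and "degree p \<le> d"
  shows "adjoint a J p = 0"
proof -
  have "p = (\<Sum>i\<le>degree p. smult (coeff p i) (monom 1 i))"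
    by (simp add: smult_monom poly_as_sum_of_monoms)
  then have "adjoint a J p = (\<Sum>i\<le>degree p. smult (coeff p i) (adjoint a J (monom 1 i)))"
    by (metis (no_types, lifting) adjoint_sum adjoint_smult sum.cong)
  also have "\<dots> = 0"
    using assms by (intro sum.neutral) auto
  finally show ?thesis .
qed

lemma degree_prod_linear_factors: "degree (\<Prod>s\<in>S. [:-s, 1:]) = card S"
  for S :: "'a::idom set"
  by (subst degree_prod_sum_eq) auto

lemma poly_prod_linear_factors_eq_0_iff:
  "finite S \<Longrightarrow> poly (\<Prod>s\<in>S. [:-s, 1:]) x = 0 \<longleftrightarrow> x \<in> S"
  for x :: "'a::idom"
  by (simp add: poly_prod)

lemma coeff_eq_0_if_adjoint_annihilates_monoms:
  fixes a :: "nat \<Rightarrow> 'a::field_char_0 poly"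
  assumes annihilated: "\<forall>c\<le>J. adjoint a J (monom 1 c) = 0" and "k \<le> J"
  shows "a k = 0"
proof -
  have "poly (a k) s = 0" for s
  proof -
    define t where "t = s + of_nat k"
    define S where "S = (\<lambda>j. t - of_nat j) ` ({0..J} - {k})"
    define p where "p = (\<Prod>x\<in>S. [:-x, 1:])"
    have "finite S"
      by (simp add: S_def)
    have "degree p \<le> J"
      using card_image_le[of "{0..J} - {k}" "\<lambda>j. t - of_nat j"] \<open>k \<le> J\<close>
      by (simp add: p_def S_def degree_prod_linear_factors)
    have p_root_iff: "poly p (t - of_nat i) = 0 \<longleftrightarrow> i \<noteq> k" if "i \<le> J" for i
      using that \<open>finite S\<close> by (auto simp: p_def S_def poly_prod_linear_factors_eq_0_iff)
    have "0 = poly (adjoint a J p) t"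
      using adjoint_eq_0_if_monoms_annihilated[OF annihilated \<open>degree p \<le> J\<close>] by simp
    also have "\<dots> = (\<Sum>i=0..J. poly (a i) (t - of_nat i) * poly p (t - of_nat i))"
      by (rule poly_adjoint)
    also have "\<dots> = poly (a k) (t - of_nat k) * poly p (t - of_nat k)"
      using \<open>k \<le> J\<close> p_root_iff by (subst sum.remove[of _ k]) (auto intro!: sum.neutral)
    finally show ?thesis
      using p_root_iff[OF \<open>k \<le> J\<close>] by (simp add: t_def)
  qed
  then show ?thesis
    using poly_all_0_iff_0 by blast
qed

lemma continued_zero_index_eq_Least:
  assumes "adjoint a J (monom 1 c) \<noteq> 0"
  shows "adjoint a J 1 \<noteq> 0 \<or>
           (\<exists>c. 0 < c \<and> adjoint a J (monom 1 c) \<noteq> 0 \<and> (\<forall>i<c. adjoint a J (monom 1 i) = 0))"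
    and "continued_zero_index a J = (LEAST c. adjoint a J (monom 1 c) \<noteq> 0)"
proof -
  define c0 where "c0 = (LEAST c. adjoint a J (monom 1 c) \<noteq> 0)"
  have c0: "adjoint a J (monom 1 c0) \<noteq> 0"
    unfolding c0_def using assms by (rule LeastI)
  have below_c0: "\<forall>i<c0. adjoint a J (monom 1 i) = 0"
    unfolding c0_def using not_less_Least by blast
  have "(adjoint a J 1 \<noteq> 0 \<or>
           (\<exists>c. 0 < c \<and> adjoint a J (monom 1 c) \<noteq> 0 \<and> (\<forall>i<c. adjoint a J (monom 1 i) = 0)))
        \<and> continued_zero_index a J = c0"
  proof (cases "c0 = 0")
    case True
    with c0 show ?thesis
      by (simp add: continued_zero_index_def)
  next
    case False
    then have "adjoint a J 1 = 0"
      using below_c0 by (metis monom_eq_1 gr0I)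
    moreover have "(LEAST c. 0 < c \<and> adjoint a J (monom 1 c) \<noteq> 0 \<and>
                     (\<forall>i<c. adjoint a J (monom 1 i) = 0)) = c0"
      using False c0 below_c0 by (intro Least_equality) (auto simp: c0_def intro: Least_le)
    ultimately show ?thesis
      using False c0 below_c0 by (auto simp: continued_zero_index_def)
  qed
  then show "adjoint a J 1 \<noteq> 0 \<or>
           (\<exists>c. 0 < c \<and> adjoint a J (monom 1 c) \<noteq> 0 \<and> (\<forall>i<c. adjoint a J (monom 1 i) = 0))"
    and "continued_zero_index a J = c0"
    by simp_all
qed

theorem lemma2p4:
  fixes a :: "nat \<Rightarrow> 'a::field_char_0 poly" and J :: nat
  assumes "\<exists>i\<le>J. a i \<noteq> 0"
  shows "(adjoint a J 1 \<noteq> 0 \<or>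
          (\<exists>c. 0 < c \<and> adjoint a J (monom 1 c) \<noteq> 0 \<and>
               (\<forall>i<c. adjoint a J (monom 1 i) = 0)))
         \<and> continued_zero_index a J \<le> J"
proof -
  obtain c where "c \<le> J" and c: "adjoint a J (monom 1 c) \<noteq> 0"
    using assms coeff_eq_0_if_adjoint_annihilates_monoms by blast
  have "continued_zero_index a J \<le> c"
    unfolding continued_zero_index_eq_Least(2)[OF c] using c by (rule Least_le)
  with \<open>c \<le> J\<close> show ?thesis
    using continued_zero_index_eq_Least(1)[OF c] by simp
qed

end
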